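(* Let $t,t':V\to\mathbb{R}_{\ge0}$ be fingerprints with $t_v\le t'_v$ for all $v\in V$. If two vertices $u,v$ are actively connected in shadow moat growing on $(G,t)$, then they are actively connected in shadow moat growing on $(G,t')$.
   Context: $G=(V,E,c)$ is an undirected graph with edge costs $c:E\to\mathbb{R}_{\ge0}$; $\delta(S)$ denotes the edges with exactly one endpoint in $S$. Shadow moat growing on $(G,t)$: a continuous process in time $\tau\ge0$ maintaining a forest $F$ (initially empty), the components of $(V,F)$, and values $y_S\ge0$ (initially $0$). At time $\tau$ a component $C$ is active iff it contains $w$ with $t_w>\tau$; each active component $C$ increases $y_C$ at rate $1$. When an edge $e$ between different components satisfies $\sum_{S:e\in\delta(S)}y_S=c_e$ it is added to $F$ and the components merge (ties processed one at a time by a fixed rule). The process stops when no component is active. Vertices $u,v$ are actively connected in a run if there is a time $\tau$ such that $u$ and $v$ lie in a common component at time $\tau$ and, for every $\tau'\in[0,\tau)$, the components containing $u$ and containing $v$ at time $\tau'$ are both active (i.e., both remain in active components from the start until they become connected). *)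

theory Defs
  imports Complex_Main
begin

text \<open>Edges are 2-element subsets of V; e is in delta(S) iff exactly one endpoint of e lies in S.
The continuous process is simulated event by event: between consecutive events the set of
components and their activity status are constant, so the y-values grow linearly.
At each event time all edges that have become tight are added (the resulting partition into
components does not depend on the order in which ties are processed).\<close>

definition active :: "('a \<Rightarrow> real) \<Rightarrow> real \<Rightarrow> 'a set \<Rightarrow> bool" where
  "active t \<tau> C \<longleftrightarrow> (\<exists>w\<in>C. \<tau> < t w)"

definition crosses :: "'a set \<Rightarrow> 'a set \<Rightarrow> bool" where
  "crosses e S \<longleftrightarrow> card (e \<inter> S) = 1"

text \<open>Sum of y_S over all S with e in delta(S) (y is supported on subsets of V).\<close>
definition load :: "'a set \<Rightarrow> ('a set \<Rightarrow> real) \<Rightarrow> 'a set \<Rightarrow> real" where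
  "load V y e = (\<Sum>S\<in>Pow V. if crosses e S then y S else 0)"

definition merge_tight ::
  "'a set \<Rightarrow> 'a set set \<Rightarrow> ('a set \<Rightarrow> real) \<Rightarrow> ('a set \<Rightarrow> real) \<Rightarrow> 'a set set \<Rightarrow> 'a set set" where
  "merge_tight V E c y P =
     (let R = {(a, b). \<exists>C\<in>P. a \<in> C \<and> b \<in> C} \<union> {(a, b). {a, b} \<in> E \<and> load V y {a, b} = c {a, b}}
      in {{w \<in> V. (a, w) \<in> R\<^sup>*} | a. a \<in> V})"

text \<open>Number of active components crossing e (rate at which the load of e grows).\<close>
definition active_rate :: "('a \<Rightarrow> real) \<Rightarrow> real \<Rightarrow> 'a set set \<Rightarrow> 'a set \<Rightarrow> nat" where
  "active_rate t \<tau> P e = card {C \<in> P. active t \<tau> C \<and> crosses e C}"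

text \<open>Candidate times of the next event: an edge between different components becomes
tight, or an active component becomes inactive.\<close>
definition event_times ::
  "'a set \<Rightarrow> 'a set set \<Rightarrow> ('a set \<Rightarrow> real) \<Rightarrow> ('a \<Rightarrow> real) \<Rightarrow> real \<Rightarrow> 'a set set \<Rightarrow> ('a set \<Rightarrow> real) \<Rightarrow> real set" where
  "event_times V E c t \<tau> P y =
     {\<tau> + (c e - load V y e) / real (active_rate t \<tau> P e) | e.
        e \<in> E \<and> \<not> (\<exists>C\<in>P. e \<subseteq> C) \<and> 0 < active_rate t \<tau> P e}
     \<union> {Max (t ` C) | C. C \<in> P \<and> active t \<tau> C}"

type_synonym 'a smg_state = "real \<times> 'a set set \<times> ('a set \<Rightarrow> real)"

definition smg_step ::
  "'a set \<Rightarrow> 'a set set \<Rightarrow> ('a set \<Rightarrow> real) \<Rightarrow> ('a \<Rightarrow> real) \<Rightarrow> 'a smg_state \<Rightarrow> 'a smg_state" where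
  "smg_step V E c t st =
     (case st of (\<tau>, P, y) \<Rightarrow>
        if \<not> (\<exists>C\<in>P. active t \<tau> C) then (\<tau>, P, y)
        else (let \<tau>' = Min (event_times V E c t \<tau> P y);
                  y' = (\<lambda>S. if S \<in> P \<and> active t \<tau> S then y S + (\<tau>' - \<tau>) else y S)
              in (\<tau>', merge_tight V E c y' P, y')))"

definition smg_init :: "'a set \<Rightarrow> 'a set set \<Rightarrow> ('a set \<Rightarrow> real) \<Rightarrow> 'a smg_state" where
  "smg_init V E c = (0, merge_tight V E c (\<lambda>_. 0) {{v} | v. v \<in> V}, (\<lambda>_. 0))"

definition smg_state ::
  "'a set \<Rightarrow> 'a set set \<Rightarrow> ('a set \<Rightarrow> real) \<Rightarrow> ('a \<Rightarrow> real) \<Rightarrow> nat \<Rightarrow> 'a smg_state" where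
  "smg_state V E c t k = (smg_step V E c t ^^ k) (smg_init V E c)"

text \<open>The component containing u at time tau (after processing the events at time tau).
Partitions only get coarser, so this is the component in the latest state reached by time tau.\<close>
definition smg_comp ::
  "'a set \<Rightarrow> 'a set set \<Rightarrow> ('a set \<Rightarrow> real) \<Rightarrow> ('a \<Rightarrow> real) \<Rightarrow> real \<Rightarrow> 'a \<Rightarrow> 'a set" where
  "smg_comp V E c t \<tau> u =
     {w. \<exists>k. fst (smg_state V E c t k) \<le> \<tau> \<and>
            (\<exists>C\<in>fst (snd (smg_state V E c t k)). u \<in> C \<and> w \<in> C)}"

definition actively_connected ::
  "'a set \<Rightarrow> 'a set set \<Rightarrow> ('a set \<Rightarrow> real) \<Rightarrow> ('a \<Rightarrow> real) \<Rightarrow> 'a \<Rightarrow> 'a \<Rightarrow> bool" where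
  "actively_connected V E c t u v \<longleftrightarrow>
     (\<exists>\<tau>\<ge>0. v \<in> smg_comp V E c t \<tau> u \<and>
        (\<forall>\<tau>'. 0 \<le> \<tau>' \<and> \<tau>' < \<tau> \<longrightarrow>
            active t \<tau>' (smg_comp V E c t \<tau>' u) \<and> active t \<tau>' (smg_comp V E c t \<tau>' v)))"

end

theory Submission
  imports Defs "HOL-Analysis.Analysis" "HOL-Library.Disjoint_Sets"
begin

text \<open>
  Run the process once with t and once with t' and compare them at equal times. By induction over
  the events of the t-run, every t-component at time \<tau> lies inside the t'-component (at time \<tau>) of
  any of its vertices. The load of an edge {a, b} at time T is the integral over [0, T] of the number
  of active components it separates. While the inclusion holds and a, b are still apart under t',
  an active t-component of a or b lies in the corresponding t'-component, which is active as well
  because t \<le> t'; so the t-rate is pointwise below the t'-rate. Hence when {a, b} goes tight in the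
  t-run, its t'-load has reached its cost too, which is impossible for an edge still separating two
  t'-components: the t'-run merges tight edges immediately. Active connectivity then transfers,
  since a larger component with a later fingerprint is active whenever the smaller one is.
\<close>

section \<open>Merging along tight edges\<close>

definition merge_rel ::
  "'a set \<Rightarrow> 'a set set \<Rightarrow> ('a set \<Rightarrow> real) \<Rightarrow> ('a set \<Rightarrow> real) \<Rightarrow> 'a set set \<Rightarrow> ('a \<times> 'a) set" where
  "merge_rel V E c y P =
     {(a, b). \<exists>C\<in>P. a \<in> C \<and> b \<in> C} \<union> {(a, b). {a, b} \<in> E \<and> load V y {a, b} = c {a, b}}"

lemma merge_tight_eq:
  "merge_tight V E c y P = {{w \<in> V. (a, w) \<in> (merge_rel V E c y P)\<^sup>*} | a. a \<in> V}"
  by (simp add: merge_tight_def merge_rel_def Let_def)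

lemma sym_merge_rel: "sym (merge_rel V E c y P)"
  unfolding sym_def merge_rel_def by (auto simp: insert_commute)

lemma rtrancl_classes_meet_eq:
  assumes "sym R" "(a, x) \<in> R\<^sup>*" "(b, x) \<in> R\<^sup>*"
  shows "{w \<in> A. (a, w) \<in> R\<^sup>*} = {w \<in> A. (b, w) \<in> R\<^sup>*}"
proof -
  have sym_star: "(q, p) \<in> R\<^sup>*" if "(p, q) \<in> R\<^sup>*" for p q
    using sym_rtrancl[OF assms(1)] that unfolding sym_def by blast
  have ab: "(a, b) \<in> R\<^sup>*"
    using rtrancl_trans[OF assms(2) sym_star[OF assms(3)]] .
  show ?thesis
    using rtrancl_trans[OF ab] rtrancl_trans[OF sym_star[OF ab]] by auto
qed

lemma partition_on_rtrancl_classes: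
  assumes "sym R"
  shows "partition_on A {{w \<in> A. (a, w) \<in> R\<^sup>*} | a. a \<in> A}" (is "partition_on A ?P")
proof (rule partition_onI)
  show "\<Union> ?P = A"
  proof (intro equalityI subsetI)
    fix a assume "a \<in> A"
    then have "a \<in> {w \<in> A. (a, w) \<in> R\<^sup>*}"
      by simp
    then show "a \<in> \<Union> ?P"
      using \<open>a \<in> A\<close> by blast
  qed blast
next
  fix p q assume "p \<in> ?P" "q \<in> ?P" "p \<noteq> q"
  then obtain a b where p: "p = {w \<in> A. (a, w) \<in> R\<^sup>*}" and q: "q = {w \<in> A. (b, w) \<in> R\<^sup>*}"
    by blast
  show "disjnt p q"
  proof (rule ccontr)
    assume "\<not> disjnt p q"
    then obtain x where "(a, x) \<in> R\<^sup>*" "(b, x) \<in> R\<^sup>*"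
      unfolding disjnt_def p q by blast
    then show False
      using rtrancl_classes_meet_eq[OF assms] \<open>p \<noteq> q\<close> p q by blast
  qed
next
  show "{} \<notin> ?P"
    by blast
qed

lemma partition_on_merge_tight: "partition_on V (merge_tight V E c y P)"
  unfolding merge_tight_eq by (rule partition_on_rtrancl_classes[OF sym_merge_rel])

lemma partition_on_unique:
  "partition_on A P \<Longrightarrow> C \<in> P \<Longrightarrow> D \<in> P \<Longrightarrow> x \<in> C \<Longrightarrow> x \<in> D \<Longrightarrow> C = D"
  unfolding partition_on_def disjoint_def by blast

lemma merge_tight_class:
  "a \<in> V \<Longrightarrow> {w \<in> V. (a, w) \<in> (merge_rel V E c y P)\<^sup>*} \<in> merge_tight V E c y P"
  unfolding merge_tight_eq by (intro CollectI exI[of _ a] conjI refl)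

lemma merge_tight_coarsens:
  assumes "partition_on V P" "C \<in> P"
  shows "\<exists>D\<in>merge_tight V E c y P. C \<subseteq> D"
proof -
  have CV: "C \<subseteq> V"
    using assms partition_onD1 by blast
  obtain a where a: "a \<in> C"
    using assms partition_onD3[OF assms(1)] by (metis ex_in_conv)
  have "C \<subseteq> {w \<in> V. (a, w) \<in> (merge_rel V E c y P)\<^sup>*}"
  proof
    fix w assume "w \<in> C"
    then have "(a, w) \<in> merge_rel V E c y P"
      using a assms(2) unfolding merge_rel_def by blast
    then show "w \<in> {w \<in> V. (a, w) \<in> (merge_rel V E c y P)\<^sup>*}"
      using CV \<open>w \<in> C\<close> by blast
  qed
  then show ?thesis
    using merge_tight_class[of a] CV a by blast
qed

lemma merge_tight_joins:
  assumes "(a, b) \<in> merge_rel V E c y P" "a \<in> V" "b \<in> V"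
  shows "\<exists>D\<in>merge_tight V E c y P. a \<in> D \<and> b \<in> D"
proof (rule bexI[OF _ merge_tight_class[OF assms(2)]])
  show "a \<in> {w \<in> V. (a, w) \<in> (merge_rel V E c y P)\<^sup>*} \<and> b \<in> {w \<in> V. (a, w) \<in> (merge_rel V E c y P)\<^sup>*}"
    using assms by blast
qed

lemma crosses_pair: "a \<noteq> b \<Longrightarrow> crosses {a, b} C \<longleftrightarrow> (a \<in> C \<longleftrightarrow> b \<notin> C)"
  by (cases "a \<in> C"; cases "b \<in> C") (simp_all add: crosses_def Int_insert_left)

section \<open>A single run of moat growing\<close>

locale moat_run =
  fixes V :: "'a set" and E :: "'a set set" and c :: "'a set \<Rightarrow> real" and t :: "'a \<Rightarrow> real"
  assumes finite_V: "finite V"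
    and edges_are_pairs: "\<forall>e\<in>E. \<exists>a b. a \<in> V \<and> b \<in> V \<and> a \<noteq> b \<and> e = {a, b}"
    and costs_nonneg: "\<forall>e\<in>E. 0 \<le> c e"
begin

text \<open>The state after the k-th event of the simulation; \<open>dual k\<close> holds the values y_S.\<close>

definition time :: "nat \<Rightarrow> real" where
  "time k = fst (smg_state V E c t k)"

definition parts :: "nat \<Rightarrow> 'a set set" where
  "parts k = fst (snd (smg_state V E c t k))"

definition dual :: "nat \<Rightarrow> 'a set \<Rightarrow> real" where
  "dual k = snd (snd (smg_state V E c t k))"

definition running :: "nat \<Rightarrow> bool" where
  "running k \<longleftrightarrow> (\<exists>C\<in>parts k. active t (time k) C)"

definition events :: "nat \<Rightarrow> real set" where
  "events k = event_times V E c t (time k) (parts k) (dual k)"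

lemma smg_state_Suc: "smg_state V E c t (Suc k) = smg_step V E c t (smg_state V E c t k)"
  by (simp add: smg_state_def)

lemma halted_step:
  assumes "\<not> running k"
  shows "time (Suc k) = time k" "parts (Suc k) = parts k" "dual (Suc k) = dual k"
proof -
  obtain \<tau> P y where s: "smg_state V E c t k = (\<tau>, P, y)"
    by (cases "smg_state V E c t k" rule: prod_cases3) blast
  have "\<not> (\<exists>C\<in>P. active t \<tau> C)"
    using assms s unfolding running_def time_def parts_def by simp
  then have "smg_state V E c t (Suc k) = smg_state V E c t k"
    unfolding smg_state_Suc s smg_step_def by simp
  then show "time (Suc k) = time k" "parts (Suc k) = parts k" "dual (Suc k) = dual k"
    unfolding time_def parts_def dual_def by simp_all
qed

lemma running_step:
  assumes "running k"
  shows "time (Suc k) = Min (events k)"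
    and "dual (Suc k) = (\<lambda>S. if S \<in> parts k \<and> active t (time k) S
                              then dual k S + (time (Suc k) - time k) else dual k S)"
    and "parts (Suc k) = merge_tight V E c (dual (Suc k)) (parts k)"
proof -
  obtain \<tau> P y where s: "smg_state V E c t k = (\<tau>, P, y)"
    by (cases "smg_state V E c t k" rule: prod_cases3) blast
  have k: "time k = \<tau>" "parts k = P" "dual k = y" "events k = event_times V E c t \<tau> P y"
    unfolding time_def parts_def dual_def events_def s by simp_all
  have "\<exists>C\<in>P. active t \<tau> C"
    using assms k unfolding running_def by simp
  then have step: "smg_state V E c t (Suc k) =
      (Min (events k),
       merge_tight V E c (\<lambda>S. if S \<in> P \<and> active t \<tau> S then y S + (Min (events k) - \<tau>) else y S) P,
       (\<lambda>S. if S \<in> P \<and> active t \<tau> S then y S + (Min (events k) - \<tau>) else y S))"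
    unfolding smg_state_Suc s smg_step_def k(4) Let_def by auto
  show time_Suc: "time (Suc k) = Min (events k)"
    unfolding time_def step by simp
  show "dual (Suc k) = (\<lambda>S. if S \<in> parts k \<and> active t (time k) S
                              then dual k S + (time (Suc k) - time k) else dual k S)"
    unfolding time_Suc unfolding dual_def step k(1-3)[symmetric] by simp
  show "parts (Suc k) = merge_tight V E c (dual (Suc k)) (parts k)"
    unfolding parts_def dual_def step k(2)[symmetric] by simp
qed

lemma time_0: "time 0 = 0"
  and parts_0: "parts 0 = merge_tight V E c (\<lambda>_. 0) {{v} | v. v \<in> V}"
  and dual_0: "dual 0 = (\<lambda>_. 0)"
  by (simp_all add: time_def parts_def dual_def smg_state_def smg_init_def)

lemma partition_parts: "partition_on V (parts k)"
proof (induction k)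
  case (Suc k)
  then show ?case
    by (cases "running k") (simp_all add: running_step halted_step partition_on_merge_tight)
qed (simp add: parts_0 partition_on_merge_tight)

lemma parts_subset: "C \<in> parts k \<Longrightarrow> C \<subseteq> V"
  using partition_onD1[OF partition_parts] by blast

lemma parts_nonempty: "C \<in> parts k \<Longrightarrow> C \<noteq> {}"
  using partition_onD3[OF partition_parts] by blast

lemma parts_cover: "a \<in> V \<Longrightarrow> \<exists>C\<in>parts k. a \<in> C"
  using partition_onD1[OF partition_parts] by blast

lemma parts_unique: "C \<in> parts k \<Longrightarrow> D \<in> parts k \<Longrightarrow> x \<in> C \<Longrightarrow> x \<in> D \<Longrightarrow> C = D"
  using partition_on_unique[OF partition_parts] .

lemma finite_parts: "finite (parts k)"
  using finite_elements[OF finite_V partition_parts] .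

lemma finite_part: "C \<in> parts k \<Longrightarrow> finite C"
  using parts_subset finite_V finite_subset by blast

lemma finite_E: "finite E"
proof -
  have "E \<subseteq> Pow V"
    using edges_are_pairs by auto
  then show ?thesis
    using finite_V finite_subset by auto
qed

lemma edge_ends: "e \<in> E \<Longrightarrow> \<exists>a b. a \<in> V \<and> b \<in> V \<and> a \<noteq> b \<and> e = {a, b}"
  using edges_are_pairs by blast

lemma parts_coarsen_Suc: "C \<in> parts k \<Longrightarrow> \<exists>D\<in>parts (Suc k). C \<subseteq> D"
  by (cases "running k")
    (auto simp: running_step halted_step intro: merge_tight_coarsens[OF partition_parts])

lemma parts_coarsen: "k \<le> j \<Longrightarrow> C \<in> parts k \<Longrightarrow> \<exists>D\<in>parts j. C \<subseteq> D"
proof (induction j rule: dec_induct)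
  case (step j)
  then show ?case
    using parts_coarsen_Suc by (meson order_trans)
qed blast

lemma load_Suc:
  assumes "running k"
  shows "load V (dual (Suc k)) e =
    load V (dual k) e + (time (Suc k) - time k) * real (active_rate t (time k) (parts k) e)"
proof -
  define A where "A = {C \<in> parts k. active t (time k) C \<and> crosses e C}"
  define d where "d = time (Suc k) - time k"
  have A_Pow: "A \<subseteq> Pow V"
    using parts_subset unfolding A_def by blast
  have "(if crosses e S then dual (Suc k) S else 0) =
      (if crosses e S then dual k S else 0) + (if S \<in> A then d else 0)" for S
    using running_step(2)[OF assms] unfolding A_def d_def by auto
  then have "load V (dual (Suc k)) e = load V (dual k) e + (\<Sum>S\<in>Pow V. if S \<in> A then d else 0)"
    unfolding load_def by (simp add: sum.distrib)
  also have "(\<Sum>S\<in>Pow V. if S \<in> A then d else 0) = (\<Sum>S\<in>A. d)"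
    using sum.inter_restrict[of "Pow V" "\<lambda>_. d" A] finite_V A_Pow
    by (simp add: Int_absorb1)
  finally show ?thesis
    unfolding d_def A_def active_rate_def by simp
qed

lemma tight_edge_merged:
  assumes "e \<in> E" "load V y e = c e"
  shows "\<exists>D\<in>merge_tight V E c y P. e \<subseteq> D"
proof -
  obtain a b where ab: "a \<in> V" "b \<in> V" "e = {a, b}"
    using edge_ends[OF assms(1)] by blast
  then have "(a, b) \<in> merge_rel V E c y P"
    using assms unfolding merge_rel_def by simp
  then show ?thesis
    using merge_tight_joins[OF _ ab(1,2)] ab(3) by blast
qed

lemma tight_edges_inside: "e \<in> E \<Longrightarrow> load V (dual k) e = c e \<Longrightarrow> \<exists>D\<in>parts k. e \<subseteq> D"
proof (induction k)
  case 0
  then show ?case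
    unfolding parts_0 dual_0 by (rule tight_edge_merged)
next
  case (Suc k)
  then show ?case
    by (cases "running k") (simp_all add: running_step(3) halted_step tight_edge_merged)
qed

lemma finite_events: "finite (events k)"
proof -
  have "events k \<subseteq>
      (\<lambda>e. time k + (c e - load V (dual k) e) / real (active_rate t (time k) (parts k) e)) ` E
      \<union> (\<lambda>C. Max (t ` C)) ` parts k"
    unfolding events_def event_times_def by blast
  then show ?thesis
    using finite_E finite_parts finite_subset by blast
qed

lemma time_Suc_in_events: "running k \<Longrightarrow> time (Suc k) \<in> events k"
proof -
  assume "running k"
  then have "events k \<noteq> {}"
    unfolding running_def events_def event_times_def by blast
  then show ?thesis
    using running_step(1)[OF \<open>running k\<close>] finite_events by simp
qed

lemma time_Suc_le_event: "running k \<Longrightarrow> x \<in> events k \<Longrightarrow> time (Suc k) \<le> x"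
  using running_step(1) finite_events by simp

lemma time_Suc_le_tight_time:
  assumes "running k" "e \<in> E" "\<not> (\<exists>C\<in>parts k. e \<subseteq> C)" "0 < active_rate t (time k) (parts k) e"
  shows "time (Suc k) \<le> time k + (c e - load V (dual k) e) / real (active_rate t (time k) (parts k) e)"
  using time_Suc_le_event[OF assms(1)] assms(2-4) unfolding events_def event_times_def by blast

lemma time_Suc_le_deadline:
  assumes "running k" "C \<in> parts k" "active t (time k) C"
  shows "time (Suc k) \<le> Max (t ` C)"
  using time_Suc_le_event[OF assms(1)] assms(2,3) unfolding events_def event_times_def by blast

lemma load_le_cost: "e \<in> E \<Longrightarrow> \<not> (\<exists>C\<in>parts k. e \<subseteq> C) \<Longrightarrow> load V (dual k) e \<le> c e"
proof (induction k)
  case 0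
  then show ?case
    using costs_nonneg by (simp add: load_def dual_0)
next
  case (Suc k)
  have outside: "\<not> (\<exists>C\<in>parts k. e \<subseteq> C)"
    using Suc.prems(2) parts_coarsen_Suc by (meson subset_trans)
  have IH: "load V (dual k) e \<le> c e"
    using Suc.IH[OF Suc.prems(1) outside] .
  show ?case
  proof (cases "running k")
    case False
    then show ?thesis
      using IH by (simp add: halted_step)
  next
    case True
    define r where "r = real (active_rate t (time k) (parts k) e)"
    have "(time (Suc k) - time k) * r \<le> c e - load V (dual k) e"
    proof (cases "r = 0")
      case False
      then have "time (Suc k) - time k \<le> (c e - load V (dual k) e) / r"
        using time_Suc_le_tight_time[OF True Suc.prems(1) outside] unfolding r_def by simp
      moreover have "0 < r"
        using False unfolding r_def by simp
      ultimately show ?thesis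
        by (simp add: le_divide_eq)
    qed (use IH in simp)
    then show ?thesis
      using load_Suc[OF True] unfolding r_def by simp
  qed
qed

lemma load_less_cost: "e \<in> E \<Longrightarrow> \<not> (\<exists>C\<in>parts k. e \<subseteq> C) \<Longrightarrow> load V (dual k) e < c e"
  using load_le_cost tight_edges_inside by fastforce

lemma active_less_Max: "C \<in> parts k \<Longrightarrow> active t s C \<Longrightarrow> s < Max (t ` C)"
  using finite_part unfolding active_def by (meson Max_ge finite_imageI imageI less_le_trans)

lemma events_later: "x \<in> events k \<Longrightarrow> time k < x"
proof (cases "x \<in> {Max (t ` C) | C. C \<in> parts k \<and> active t (time k) C}")
  case True
  then show ?thesis
    using active_less_Max by blast
next
  case False
  assume "x \<in> events k"
  then obtain e where e: "e \<in> E" "\<not> (\<exists>C\<in>parts k. e \<subseteq> C)" "0 < active_rate t (time k) (parts k) e"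
    and x: "x = time k + (c e - load V (dual k) e) / real (active_rate t (time k) (parts k) e)"
    using False unfolding events_def event_times_def by blast
  have "0 < (c e - load V (dual k) e) / real (active_rate t (time k) (parts k) e)"
    using load_less_cost[OF e(1,2)] e(3) by simp
  then show ?thesis
    using x by linarith
qed

lemma time_less_Suc: "running k \<Longrightarrow> time k < time (Suc k)"
  using events_later time_Suc_in_events by blast

lemma time_le_Suc: "time k \<le> time (Suc k)"
  by (cases "running k") (simp_all add: time_less_Suc less_imp_le halted_step)

lemma time_mono: "k \<le> j \<Longrightarrow> time k \<le> time j"
  by (induction j rule: dec_induct) (auto intro: order_trans time_le_Suc)

lemma time_nonneg: "0 \<le> time k"
  using time_mono[of 0 k] time_0 by simp

subsection \<open>Termination\<close>

text \<open>Each event either lets the deadline of a pending vertex pass or merges two parts.\<close>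

definition pending :: "nat \<Rightarrow> 'a set" where
  "pending k = {v \<in> V. time k < t v}"

definition potential :: "nat \<Rightarrow> nat" where
  "potential k = card (parts k) + card (pending k)"

definition successor_part :: "nat \<Rightarrow> 'a set \<Rightarrow> 'a set" where
  "successor_part k C = (SOME D. D \<in> parts (Suc k) \<and> C \<subseteq> D)"

lemma successor_part: "C \<in> parts k \<Longrightarrow> successor_part k C \<in> parts (Suc k) \<and> C \<subseteq> successor_part k C"
  unfolding successor_part_def using parts_coarsen_Suc by (metis (no_types, lifting) someI_ex)

lemma parts_Suc_image: "parts (Suc k) = successor_part k ` parts k"
proof
  show "parts (Suc k) \<subseteq> successor_part k ` parts k"
  proof
    fix D assume D: "D \<in> parts (Suc k)"
    obtain x where x: "x \<in> D"
      using parts_nonempty[OF D] by blast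
    then obtain C where C: "C \<in> parts k" "x \<in> C"
      using parts_cover parts_subset[OF D] by blast
    then have "successor_part k C = D"
      using successor_part parts_unique[OF _ D _ x] by blast
    then show "D \<in> successor_part k ` parts k"
      using C(1) by blast
  qed
qed (use successor_part in blast)

lemma card_parts_Suc_le: "card (parts (Suc k)) \<le> card (parts k)"
  unfolding parts_Suc_image by (rule card_image_le[OF finite_parts])

lemma card_parts_Suc_less:
  assumes "C1 \<in> parts k" "C2 \<in> parts k" "C1 \<noteq> C2" "D \<in> parts (Suc k)" "C1 \<inter> D \<noteq> {}" "C2 \<inter> D \<noteq> {}"
  shows "card (parts (Suc k)) < card (parts k)"
proof -
  have "successor_part k C1 = D" "successor_part k C2 = D"
    using successor_part[OF assms(1)] successor_part[OF assms(2)] parts_unique[OF _ assms(4)] assms(5,6)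
    by blast+
  then have "\<not> inj_on (successor_part k) (parts k)"
    using assms(1-3) unfolding inj_on_def by metis
  then have "card (successor_part k ` parts k) \<noteq> card (parts k)"
    using inj_on_iff_eq_card[OF finite_parts] by metis
  then show ?thesis
    using card_parts_Suc_le unfolding parts_Suc_image by (simp add: le_neq_implies_less)
qed

lemma finite_pending: "finite (pending k)"
  unfolding pending_def using finite_V by simp

lemma pending_Suc_subset: "pending (Suc k) \<subseteq> pending k"
  unfolding pending_def using time_le_Suc[of k] by auto

lemma deadline_event_shrinks_pending:
  assumes "C \<in> parts k" "active t (time k) C" "time (Suc k) = Max (t ` C)"
  shows "card (pending (Suc k)) < card (pending k)"
proof -
  have "Max (t ` C) \<in> t ` C"
    using parts_nonempty[OF assms(1)] finite_part[OF assms(1)] by simp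
  then obtain w where w: "w \<in> C" "t w = Max (t ` C)"
    by auto
  have "w \<in> pending k"
    using active_less_Max[OF assms(1,2)] w parts_subset[OF assms(1)] unfolding pending_def by auto
  moreover have "w \<notin> pending (Suc k)"
    using w(2) assms(3) unfolding pending_def by simp
  ultimately show ?thesis
    using pending_Suc_subset by (metis finite_pending psubsetI psubset_card_mono subsetD)
qed

lemma tight_event_merges:
  assumes "running k" "e \<in> E" "\<not> (\<exists>C\<in>parts k. e \<subseteq> C)" "0 < active_rate t (time k) (parts k) e"
    and "time (Suc k) = time k + (c e - load V (dual k) e) / real (active_rate t (time k) (parts k) e)"
  shows "card (parts (Suc k)) < card (parts k)"
proof -
  have "load V (dual (Suc k)) e = c e"
    using load_Suc[OF assms(1)] assms(4,5) by simp
  then obtain D where D: "D \<in> parts (Suc k)" "e \<subseteq> D"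
    using tight_edges_inside[OF assms(2)] by blast
  obtain a b where ab: "a \<in> V" "b \<in> V" "e = {a, b}"
    using edge_ends[OF assms(2)] by blast
  obtain C1 C2 where C: "C1 \<in> parts k" "a \<in> C1" "C2 \<in> parts k" "b \<in> C2"
    using parts_cover ab(1,2) by meson
  then have "C1 \<noteq> C2"
    using assms(3) ab(3) by blast
  then show ?thesis
    using card_parts_Suc_less[OF C(1,3) _ D(1)] C D(2) ab(3) by blast
qed

lemma potential_decreases:
  assumes "running k"
  shows "potential (Suc k) < potential k"
proof -
  have pending_le: "card (pending (Suc k)) \<le> card (pending k)"
    using card_mono[OF finite_pending pending_Suc_subset] .
  have "time (Suc k) \<in> events k"
    using time_Suc_in_events[OF assms] .
  then consider (deadline) C where "C \<in> parts k" "active t (time k) C" "time (Suc k) = Max (t ` C)"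
    | (tight) e where "e \<in> E" "\<not> (\<exists>C\<in>parts k. e \<subseteq> C)" "0 < active_rate t (time k) (parts k) e"
        "time (Suc k) = time k + (c e - load V (dual k) e) / real (active_rate t (time k) (parts k) e)"
    unfolding events_def event_times_def by blast
  then show ?thesis
  proof cases
    case deadline
    then show ?thesis
      using deadline_event_shrinks_pending card_parts_Suc_le[of k] unfolding potential_def
      by (meson add_le_less_mono)
  next
    case tight
    then show ?thesis
      using tight_event_merges[OF assms] pending_le unfolding potential_def
      by (meson add_less_le_mono)
  qed
qed

lemma eventually_halts: "\<exists>N. \<not> running N"
proof (rule ccontr)
  assume "\<nexists>N. \<not> running N"
  then have "potential k + k \<le> potential 0" for k
  proof (induction k)
    case (Suc k)
    then show ?case
      using potential_decreases[of k] by simp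
  qed simp
  from this[of "Suc (potential 0)"] show False
    by simp
qed

lemma halted_forever:
  assumes "\<not> running N" "N \<le> j"
  shows "time j = time N \<and> parts j = parts N \<and> dual j = dual N \<and> \<not> running j"
  using assms(2)
proof (induction j rule: dec_induct)
  case (step i)
  then have "\<not> running i"
    by simp
  then show ?case
    using step.IH halted_step[of i] unfolding running_def by simp
qed (use assms(1) in simp)

subsection \<open>Components and edge rates in continuous time\<close>

abbreviation component :: "real \<Rightarrow> 'a \<Rightarrow> 'a set" where
  "component s a \<equiv> smg_comp V E c t s a"

lemma component_iff: "x \<in> component s a \<longleftrightarrow> (\<exists>k. time k \<le> s \<and> (\<exists>C\<in>parts k. a \<in> C \<and> x \<in> C))"
  unfolding smg_comp_def time_def parts_def by simp

lemma component_mono: "s \<le> s' \<Longrightarrow> component s a \<subseteq> component s' a"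
  unfolding subset_iff component_iff by (meson order_trans)

lemma component_subset: "component s a \<subseteq> V"
  using parts_subset component_iff by blast

lemma component_self: "a \<in> V \<Longrightarrow> 0 \<le> s \<Longrightarrow> a \<in> component s a"
  unfolding component_iff using parts_cover[of a 0] time_0 by (metis order.refl)

lemma component_sym: "b \<in> component s a \<Longrightarrow> a \<in> component s b"
  unfolding component_iff by blast

lemma component_trans:
  assumes "b \<in> component s a" "x \<in> component s b"
  shows "x \<in> component s a"
proof -
  obtain k1 C1 where 1: "time k1 \<le> s" "C1 \<in> parts k1" "a \<in> C1" "b \<in> C1"
    using assms(1) unfolding component_iff by blast
  obtain k2 C2 where 2: "time k2 \<le> s" "C2 \<in> parts k2" "b \<in> C2" "x \<in> C2"
    using assms(2) unfolding component_iff by blast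
  obtain D1 where D1: "D1 \<in> parts (max k1 k2)" "C1 \<subseteq> D1"
    using parts_coarsen[of k1 "max k1 k2"] 1(2) by auto
  obtain D2 where D2: "D2 \<in> parts (max k1 k2)" "C2 \<subseteq> D2"
    using parts_coarsen[of k2 "max k1 k2"] 2(2) by auto
  have "D1 = D2"
    using parts_unique[OF D1(1) D2(1)] D1(2) D2(2) 1(4) 2(3) by blast
  moreover have "time (max k1 k2) \<le> s"
    using 1(1) 2(1) by (simp add: max_def)
  ultimately show ?thesis
    unfolding component_iff using D1 D2 1 2 by blast
qed

lemma component_between_events:
  assumes m: "time m \<le> s" "s < time (Suc m) \<or> \<not> running m" and C: "C \<in> parts m" "a \<in> C"
  shows "component s a = C"
proof
  show "C \<subseteq> component s a"
    using m C component_iff by blast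
  show "component s a \<subseteq> C"
  proof
    fix x assume "x \<in> component s a"
    then obtain k C' where k: "time k \<le> s" "C' \<in> parts k" "a \<in> C'" "x \<in> C'"
      unfolding component_iff by blast
    have "k \<le> m \<or> (\<not> running m \<and> m \<le> k)"
      using m(2) k(1) time_mono[of "Suc m" k] by linarith
    then obtain D where "D \<in> parts m" "C' \<subseteq> D"
      using parts_coarsen[OF _ k(2)] halted_forever[of m k] k(2) by auto
    then show "x \<in> C"
      using parts_unique[OF _ C(1)] C(2) k(3,4) by blast
  qed
qed

lemma active_between_events:
  assumes m: "time m \<le> s" "s < time (Suc m) \<or> \<not> running m" and C: "C \<in> parts m"
  shows "active t s C \<longleftrightarrow> active t (time m) C"
proof
  assume "active t s C"
  then show "active t (time m) C"
    using m(1) unfolding active_def by force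
next
  assume a: "active t (time m) C"
  then have "running m"
    using C unfolding running_def by blast
  then have "s < Max (t ` C)"
    using m(2) time_Suc_le_deadline[OF _ C a] by fastforce
  moreover have "Max (t ` C) \<in> t ` C"
    using parts_nonempty[OF C] finite_part[OF C] by simp
  ultimately show "active t s C"
    unfolding active_def by auto
qed

lemma between_events_exists:
  assumes "0 \<le> s"
  shows "\<exists>m. time m \<le> s \<and> (s < time (Suc m) \<or> \<not> running m)"
proof -
  obtain N where N: "\<not> running N"
    using eventually_halts by blast
  define m where "m = Max {m. m \<le> N \<and> time m \<le> s}"
  have "0 \<in> {m. m \<le> N \<and> time m \<le> s}"
    using assms time_0 by simp
  then have "m \<in> {m. m \<le> N \<and> time m \<le> s}"
    unfolding m_def by (intro Max_in) auto
  then have m: "m \<le> N" "time m \<le> s"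
    by auto
  have "s < time (Suc m)" if "m \<noteq> N"
  proof (rule ccontr)
    assume "\<not> s < time (Suc m)"
    then have "Suc m \<in> {m. m \<le> N \<and> time m \<le> s}"
      using m that by simp
    then have "Suc m \<le> m"
      unfolding m_def by (intro Max_ge) auto
    then show False
      by simp
  qed
  then show ?thesis
    using m N by blast
qed

lemma active_rate_pair:
  assumes ab: "a \<noteq> b" and Ca: "Ca \<in> parts m" "a \<in> Ca" and Cb: "Cb \<in> parts m" "b \<in> Cb"
  shows "real (active_rate t s (parts m) {a, b}) =
    (if Ca = Cb then 0 else of_bool (active t s Ca) + of_bool (active t s Cb))"
proof -
  have "a \<in> C \<longleftrightarrow> C = Ca" "b \<in> C \<longleftrightarrow> C = Cb" if "C \<in> parts m" for C
    using parts_unique[OF that] Ca Cb by blast+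
  then have A: "{C \<in> parts m. active t s C \<and> crosses {a, b} C} =
      {C \<in> parts m. active t s C \<and> (C = Ca \<longleftrightarrow> C \<noteq> Cb)}"
    using crosses_pair[OF ab] by blast
  show ?thesis
  proof (cases "Ca = Cb")
    case True
    then show ?thesis
      unfolding active_rate_def A by simp
  next
    case False
    have "{C \<in> parts m. active t s C \<and> (C = Ca \<longleftrightarrow> C \<noteq> Cb)} =
        (if active t s Ca then {Ca} else {}) \<union> (if active t s Cb then {Cb} else {})"
      using False Ca(1) Cb(1) by auto
    then show ?thesis
      unfolding active_rate_def A using False by simp
  qed
qed

text \<open>
  The rate at which the load of {a, b} grows at time s, read off from the components at time s
  rather than from the event index, so that rates of runs with different events can be compared.
\<close>

definition rate :: "'a \<Rightarrow> 'a \<Rightarrow> real \<Rightarrow> real" where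
  "rate a b s = (if b \<in> component s a then 0
     else of_bool (active t s (component s a)) + of_bool (active t s (component s b)))"

lemma rate_between_events:
  assumes ab: "a \<in> V" "b \<in> V" "a \<noteq> b"
    and m: "time m \<le> s" "s < time (Suc m) \<or> \<not> running m"
  shows "rate a b s = real (active_rate t (time m) (parts m) {a, b})"
proof -
  obtain Ca Cb where Ca: "Ca \<in> parts m" "a \<in> Ca" and Cb: "Cb \<in> parts m" "b \<in> Cb"
    using parts_cover ab(1,2) by meson
  have "b \<in> Ca \<longleftrightarrow> Ca = Cb"
    using parts_unique[OF Ca(1) Cb(1) _ Cb(2)] Cb(2) by blast
  then show ?thesis
    unfolding rate_def active_rate_pair[OF ab(3) Ca Cb]
      component_between_events[OF m Ca] component_between_events[OF m Cb]
      active_between_events[OF m Ca(1)] active_between_events[OF m Cb(1)]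
    by simp
qed

lemma rate_integral_between_events:
  assumes ab: "a \<in> V" "b \<in> V" "a \<noteq> b"
    and m: "time m \<le> T" "T \<le> time (Suc m) \<or> \<not> running m"
  shows "(rate a b has_integral ((T - time m) * real (active_rate t (time m) (parts m) {a, b})))
           {time m..T}"
proof -
  define r where "r = real (active_rate t (time m) (parts m) {a, b})"
  have const: "((\<lambda>x. r) has_integral ((T - time m) * r)) {time m..T}"
    using has_integral_const_real[of r "time m" T] m(1) by simp
  show ?thesis
    unfolding r_def[symmetric]
  proof (rule has_integral_spike_finite[OF _ _ const])
    fix x assume "x \<in> {time m..T} - {T}"
    then have "time m \<le> x" "x < time (Suc m) \<or> \<not> running m"
      using m(2) by auto
    then show "rate a b x = r"
      unfolding r_def by (rule rate_between_events[OF ab])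
  qed simp
qed

lemma load_eq_rate_integral:
  assumes ab: "a \<in> V" "b \<in> V" "a \<noteq> b"
  shows "(rate a b has_integral load V (dual m) {a, b}) {0..time m}"
proof (induction m)
  case 0
  have "((\<lambda>x. 0::real) has_integral 0) {0..0}"
    using has_integral_const_real[of "0::real" 0 0] by simp
  then have "(rate a b has_integral 0) {0..0}"
    by (rule has_integral_spike_finite[where S = "{0}", rotated 2]) auto
  then show ?case
    by (simp add: load_def dual_0 time_0)
next
  case (Suc m)
  show ?case
  proof (cases "running m")
    case False
    then show ?thesis
      using Suc.IH by (simp add: halted_step)
  next
    case True
    have "(rate a b has_integral (load V (dual m) {a, b} +
        (time (Suc m) - time m) * real (active_rate t (time m) (parts m) {a, b}))) {0..time (Suc m)}"
      by (rule has_integral_combine[OF time_nonneg time_le_Suc Suc.IH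
            rate_integral_between_events[OF ab time_le_Suc]]) simp
    then show ?thesis
      using load_Suc[OF True] by simp
  qed
qed

lemma rate_integral_less_cost:
  assumes ab: "a \<in> V" "b \<in> V" "a \<noteq> b" "{a, b} \<in> E"
    and T: "0 \<le> T" "b \<notin> component T a"
  shows "\<exists>X. (rate a b has_integral X) {0..T} \<and> X < c {a, b}"
proof -
  obtain m where m: "time m \<le> T" "T < time (Suc m) \<or> \<not> running m"
    using between_events_exists[OF T(1)] by blast
  define r where "r = real (active_rate t (time m) (parts m) {a, b})"
  have "(rate a b has_integral (load V (dual m) {a, b} + (T - time m) * r)) {0..T}"
    unfolding r_def using m
    by (intro has_integral_combine[OF time_nonneg m(1) load_eq_rate_integral[OF ab(1-3)]
          rate_integral_between_events[OF ab(1-3) m(1)]]) auto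
  moreover have outside: "\<not> (\<exists>C\<in>parts m. {a, b} \<subseteq> C)"
    using T(2) m(1) component_iff by blast
  have "(T - time m) * r < c {a, b} - load V (dual m) {a, b}"
  proof (cases "r = 0")
    case True
    then show ?thesis
      using load_less_cost[OF ab(4) outside] by simp
  next
    case False
    then have rate_pos: "0 < active_rate t (time m) (parts m) {a, b}"
      unfolding r_def by simp
    then have "{C \<in> parts m. active t (time m) C \<and> crosses {a, b} C} \<noteq> {}"
      unfolding active_rate_def by (metis card.empty less_irrefl)
    then have "running m"
      unfolding running_def by blast
    then have "T < time (Suc m)"
      using m(2) by simp
    also have "time (Suc m) \<le> time m + (c {a, b} - load V (dual m) {a, b}) / r"
      using time_Suc_le_tight_time[OF \<open>running m\<close> ab(4) outside rate_pos] unfolding r_def .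
    finally have "T - time m < (c {a, b} - load V (dual m) {a, b}) / r"
      by linarith
    then show ?thesis
      using rate_pos unfolding r_def by (simp add: less_divide_eq)
  qed
  ultimately show ?thesis
    by (intro exI[of _ "load V (dual m) {a, b} + (T - time m) * r"]) auto
qed

end

section \<open>Monotonicity in the fingerprint\<close>

locale moat_run_pair = R1: moat_run V E c t + R2: moat_run V E c t'
  for V :: "'a set" and E :: "'a set set" and c :: "'a set \<Rightarrow> real" and t t' :: "'a \<Rightarrow> real" +
  assumes fingerprint_le: "\<forall>w\<in>V. t w \<le> t' w"
begin

lemma active_mono:
  assumes "C \<subseteq> C'" "C \<subseteq> V" "active t s C"
  shows "active t' s C'"
proof -
  obtain w where "w \<in> C" "s < t w"
    using assms(3) unfolding active_def by blast
  moreover have "t w \<le> t' w"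
    using fingerprint_le \<open>w \<in> C\<close> assms(2) by blast
  ultimately show ?thesis
    using assms(1) unfolding active_def by force
qed

lemma rate_le:
  assumes "R1.component s a \<subseteq> R2.component s a" "R1.component s b \<subseteq> R2.component s b"
    and "b \<notin> R2.component s a"
  shows "R1.rate a b s \<le> R2.rate a b s"
proof -
  have "of_bool (active t s (R1.component s x)) \<le> (of_bool (active t' s (R2.component s x)) :: real)"
    if "R1.component s x \<subseteq> R2.component s x" for x
    using active_mono[OF that R1.component_subset] by (cases "active t s (R1.component s x)") simp_all
  moreover have "b \<notin> R1.component s a"
    using assms(1,3) by blast
  ultimately show ?thesis
    unfolding R1.rate_def R2.rate_def using assms add_mono by simp
qed

lemma tight_edge_joined:
  assumes ab: "a \<in> V" "b \<in> V" "a \<noteq> b" "{a, b} \<in> E"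
    and tight: "load V (R1.dual k) {a, b} = c {a, b}"
    and before: "\<forall>s<R1.time k. \<forall>x\<in>V. R1.component s x \<subseteq> R2.component s x"
  shows "b \<in> R2.component (R1.time k) a"
proof (rule ccontr)
  define T where "T = R1.time k"
  assume "b \<notin> R2.component (R1.time k) a"
  then have apart: "b \<notin> R2.component T a"
    unfolding T_def .
  have R1_integral: "(R1.rate a b has_integral c {a, b}) {0..T}"
    using R1.load_eq_rate_integral[OF ab(1-3), of k] tight unfolding T_def by simp
  obtain X where X: "(R2.rate a b has_integral X) {0..T}" "X < c {a, b}"
    using R2.rate_integral_less_cost[OF ab _ apart] R1.time_nonneg unfolding T_def by blast
  have "R1.rate a b s \<le> R2.rate a b s" if "s \<in> {0..T}" for s
  proof (cases "s = T")
    case True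
    obtain D where "D \<in> R1.parts k" "{a, b} \<subseteq> D"
      using R1.tight_edges_inside[OF ab(4) tight] by blast
    then have "b \<in> R1.component T a"
      unfolding T_def using R1.component_iff by blast
    then show ?thesis
      unfolding True R1.rate_def R2.rate_def by simp
  next
    case False
    then have "s < T"
      using that by simp
    then have "b \<notin> R2.component s a"
      using R2.component_mono[of s T a] apart by auto
    moreover have "R1.component s x \<subseteq> R2.component s x" if "x \<in> V" for x
      using before \<open>s < T\<close> that unfolding T_def by blast
    ultimately show ?thesis
      using rate_le ab(1,2) by blast
  qed
  then have "c {a, b} \<le> X"
    by (rule has_integral_le[OF R1_integral X(1)])
  then show False
    using X(2) by simp
qed

definition refined_at :: "nat \<Rightarrow> bool" where
  "refined_at k \<longleftrightarrow> (\<forall>C\<in>R1.parts k. \<forall>a\<in>C. C \<subseteq> R2.component (R1.time k) a)"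

lemma components_le_before:
  assumes "\<forall>i<k. refined_at i" "s < R1.time k"
  shows "R1.component s x \<subseteq> R2.component s x"
proof
  fix y assume "y \<in> R1.component s x"
  then obtain i C where i: "R1.time i \<le> s" "C \<in> R1.parts i" "x \<in> C" "y \<in> C"
    unfolding R1.component_iff by blast
  have "i < k"
  proof (rule ccontr)
    assume "\<not> i < k"
    then have "R1.time k \<le> R1.time i"
      by (simp add: R1.time_mono)
    then show False
      using i(1) assms(2) by simp
  qed
  then have "y \<in> R2.component (R1.time i) x"
    using assms(1) i(2-4) unfolding refined_at_def by blast
  then show "y \<in> R2.component s x"
    using R2.component_mono[OF i(1)] by blast
qed

lemma merge_rel_within_component:
  assumes refined: "refined_at j"
    and before: "\<forall>s<R1.time (Suc j). \<forall>x\<in>V. R1.component s x \<subseteq> R2.component s x"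
    and path: "(a, w) \<in> (merge_rel V E c (R1.dual (Suc j)) (R1.parts j))\<^sup>*" and "a \<in> V"
  shows "w \<in> R2.component (R1.time (Suc j)) a"
  using path
proof (induction rule: rtrancl_induct)
  case base
  then show ?case
    using R2.component_self[OF \<open>a \<in> V\<close> R1.time_nonneg] .
next
  case (step y z)
  from step(2) consider (same_part) C where "C \<in> R1.parts j" "y \<in> C" "z \<in> C"
    | (tight_edge) "{y, z} \<in> E" "load V (R1.dual (Suc j)) {y, z} = c {y, z}"
    unfolding merge_rel_def by blast
  then have "z \<in> R2.component (R1.time (Suc j)) y"
  proof cases
    case same_part
    then have "z \<in> R2.component (R1.time j) y"
      using refined unfolding refined_at_def by blast
    then show ?thesis
      using R2.component_mono[OF R1.time_le_Suc] by blast
  next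
    case tight_edge
    then obtain a' b' where "a' \<in> V" "b' \<in> V" "{y, z} = {a', b'}"
      using R1.edge_ends by blast
    then have yz: "y \<in> V" "z \<in> V"
      by (metis doubleton_eq_iff)+
    show ?thesis
    proof (cases "y = z")
      case True
      then show ?thesis
        using R2.component_self[OF yz(1) R1.time_nonneg] by simp
    qed (rule tight_edge_joined[OF yz _ tight_edge before])
  qed
  then show ?case
    using R2.component_trans step(3) by blast
qed

lemma refined: "refined_at k"
proof (induction k rule: less_induct)
  case (less k)
  show ?case
  proof (cases k)
    case 0
    have "C \<subseteq> R2.component 0 a" if "C \<in> R2.parts 0" "a \<in> C" for C a
      using that R2.time_0 R2.component_iff by (intro subsetI) (metis order.refl)
    then show ?thesis
      unfolding refined_at_def 0 R1.parts_0 R1.time_0 R2.parts_0[symmetric] by blast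
  next
    case (Suc j)
    have before: "\<forall>s<R1.time (Suc j). \<forall>x\<in>V. R1.component s x \<subseteq> R2.component s x"
      using components_le_before less Suc by blast
    show ?thesis
    proof (cases "R1.running j")
      case False
      then show ?thesis
        using less Suc R1.halted_step[OF False] unfolding refined_at_def by simp
    next
      case True
      show ?thesis
        unfolding refined_at_def
      proof (intro ballI subsetI)
        fix C a x assume C: "C \<in> R1.parts k" "a \<in> C" "x \<in> C"
        then obtain a0 where a0: "a0 \<in> V"
          "C = {w \<in> V. (a0, w) \<in> (merge_rel V E c (R1.dual (Suc j)) (R1.parts j))\<^sup>*}"
          using R1.running_step(3)[OF True] Suc unfolding merge_tight_eq by auto
        have "a \<in> R2.component (R1.time k) a0" "x \<in> R2.component (R1.time k) a0"
          using merge_rel_within_component[OF _ before _ a0(1)] less Suc C(2,3) a0(2) by auto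
        then show "x \<in> R2.component (R1.time k) a"
          using R2.component_sym R2.component_trans by blast
      qed
    qed
  qed
qed

lemma component_le: "R1.component s a \<subseteq> R2.component s a"
proof
  fix x assume "x \<in> R1.component s a"
  then obtain k C where k: "R1.time k \<le> s" "C \<in> R1.parts k" "a \<in> C" "x \<in> C"
    unfolding R1.component_iff by blast
  then show "x \<in> R2.component s a"
    using refined R2.component_mono[OF k(1)] unfolding refined_at_def by blast
qed

end

theorem mainTheorem5:
  fixes V :: "'a set" and E :: "'a set set" and c :: "'a set \<Rightarrow> real"
    and t t' :: "'a \<Rightarrow> real" and u v :: 'a
  assumes "finite V"
    and "\<forall>e\<in>E. \<exists>a b. a \<in> V \<and> b \<in> V \<and> a \<noteq> b \<and> e = {a, b}"
    and "\<forall>e\<in>E. 0 \<le> c e"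
    and "\<forall>w\<in>V. 0 \<le> t w" and "\<forall>w\<in>V. 0 \<le> t' w"
    and "\<forall>w\<in>V. t w \<le> t' w"
    and "u \<in> V" and "v \<in> V"
    and "actively_connected V E c t u v"
  shows "actively_connected V E c t' u v"
proof -
  interpret moat_run_pair V E c t t'
    by unfold_locales (use assms(1-3,6) in auto)
  obtain \<tau> where "0 \<le> \<tau>" "v \<in> R1.component \<tau> u"
    and active: "\<forall>\<tau>'. 0 \<le> \<tau>' \<and> \<tau>' < \<tau> \<longrightarrow>
        active t \<tau>' (R1.component \<tau>' u) \<and> active t \<tau>' (R1.component \<tau>' v)"
    using assms(9) unfolding actively_connected_def by blast
  have "active t' s (R2.component s w)" if "active t s (R1.component s w)" for s w
    using active_mono[OF component_le R1.component_subset that] .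
  then have "\<forall>\<tau>'. 0 \<le> \<tau>' \<and> \<tau>' < \<tau> \<longrightarrow>
      active t' \<tau>' (R2.component \<tau>' u) \<and> active t' \<tau>' (R2.component \<tau>' v)"
    using active by blast
  moreover have "v \<in> R2.component \<tau> u"
    using component_le \<open>v \<in> R1.component \<tau> u\<close> by blast
  ultimately show ?thesis
    unfolding actively_connected_def using \<open>0 \<le> \<tau>\<close> by blast
qed

end
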